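(* Let $X$ be a nonempty discrete (finite or countable) set, $p^*$ a probability distribution on $X$, $X^{\checkmark}=\{x\in X:p^*(x)>0\}$, and let $x_1,\dots,x_N\in X^{\checkmark}$ ($N\ge1$) with dataset $\mathcal{X}=\{x_1,\dots,x_N\}$ and $q(x)=\frac1N\#\{i:x_i=x\}$. Let $F$ be a set of probability distributions on $X$, and for $x\in X$ let $C(x)=\{x'\in X:\ f(x')=f(x)\text{ for all } f\in F\}$. Suppose (i) $F$ generalizes from $\mathcal{X}$ to $X^{\checkmark}$, i.e., $\{C(x):x\in\mathcal{X}\}=\{C(x):x\in X^{\checkmark}\}$; (ii) $p^*\in F$; (iii) no two distinct data points of $\mathcal{X}$ lie in the same class, i.e., $C(x)\ne C(x')$ for distinct $x,x'\in\mathcal{X}$. Then every maximizer $\hat p^*_F$ of $\mathbb{E}_{q(x)}[\log p(x)]=\frac1N\sum_i\log p(x_i)$ over $p\in F$ is complete: $\hat p^*_F(x)>0$ for all $x\in X^{\checkmark}$.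
   Context: A probability distribution on $X$ is $p:X\to[0,\infty)$ with $\sum_x p(x)=1$; $\log 0=-\infty$. A distribution is complete if it assigns positive mass to every valid point $x\in X^{\checkmark}$. *)

theory Defs
  imports "HOL-Analysis.Analysis" "HOL-Library.Extended_Real"
begin

text \<open>The discrete set X is the (countable, nonempty) type 'a.\<close>

definition is_distr :: "('a \<Rightarrow> real) \<Rightarrow> bool" where
  "is_distr p \<longleftrightarrow> (\<forall>x. p x \<ge> 0) \<and> (p has_sum 1) UNIV"

definition valid_pts :: "('a \<Rightarrow> real) \<Rightarrow> 'a set" where
  "valid_pts pstar = {x. pstar x > 0}"

definition elog :: "real \<Rightarrow> ereal" where
  "elog t = (if t = 0 then -\<infinity> else ereal (ln t))"

definition cls :: "('a \<Rightarrow> real) set \<Rightarrow> 'a \<Rightarrow> 'a set" where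
  "cls F x = {x'. \<forall>f\<in>F. f x' = f x}"

definition loglik :: "nat \<Rightarrow> (nat \<Rightarrow> 'a) \<Rightarrow> ('a \<Rightarrow> real) \<Rightarrow> ereal" where
  "loglik N xs p = ereal (1 / real N) * (\<Sum>i<N. elog (p (xs i)))"

definition complete_distr :: "('a \<Rightarrow> real) \<Rightarrow> ('a \<Rightarrow> real) \<Rightarrow> bool" where
  "complete_distr pstar p \<longleftrightarrow> (\<forall>x\<in>valid_pts pstar. p x > 0)"

end

theory Submission
  imports Defs
begin

text \<open>
  Since \<open>p\<^sup>* \<in> F\<close> is positive on the data, its log-likelihood is finite, so a maximizer
  \<open>p\<close> has finite log-likelihood too and must be positive on every data point.
  Every \<open>f \<in> F\<close>, in particular \<open>p\<close>, is constant on each class \<open>C(x)\<close>, and by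
  generalization every valid point shares its class with a data point.
\<close>

lemma elog_eq_minf_iff [simp]: "elog t = -\<infinity> \<longleftrightarrow> t = 0"
  by (simp add: elog_def)

lemma elog_neq_pinf [simp]: "elog t \<noteq> \<infinity>"
  by (simp add: elog_def)

lemma sum_elog_eq_minf_iff:
  assumes "finite A"
  shows "(\<Sum>i\<in>A. elog (g i)) = -\<infinity> \<longleftrightarrow> (\<exists>i\<in>A. g i = 0)"
proof
  assume "\<exists>i\<in>A. g i = 0"
  then obtain j where j: "j \<in> A" "g j = 0" by blast
  have "(\<Sum>i\<in>A. elog (g i)) = elog (g j) + (\<Sum>i\<in>A - {j}. elog (g i))"
    using assms j(1) by (simp add: sum.remove)
  moreover have "(\<Sum>i\<in>A - {j}. elog (g i)) \<noteq> \<infinity>"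
    by (simp add: sum_Pinfty)
  ultimately show "(\<Sum>i\<in>A. elog (g i)) = -\<infinity>"
    using j(2) by simp
next
  assume minf: "(\<Sum>i\<in>A. elog (g i)) = -\<infinity>"
  show "\<exists>i\<in>A. g i = 0"
  proof (rule ccontr)
    assume "\<not> (\<exists>i\<in>A. g i = 0)"
    then have "(\<Sum>i\<in>A. elog (g i)) = (\<Sum>i\<in>A. ereal (ln (g i)))"
      by (intro sum.cong) (auto simp: elog_def)
    with minf show False
      by simp
  qed
qed

lemma loglik_eq_minf_iff:
  assumes "N \<ge> 1"
  shows "loglik N xs p = -\<infinity> \<longleftrightarrow> (\<exists>i<N. p (xs i) = 0)"
proof -
  have "ereal (1 / real N) > 0"
    using assms by simp
  then show ?thesis
    by (auto simp: loglik_def sum_elog_eq_minf_iff ereal_mult_eq_MInfty)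
qed

lemma maximizer_pos_on_data:
  assumes "N \<ge> 1"
    and "\<forall>i<N. p (xs i) > 0"
    and "\<forall>i<N. phat (xs i) \<ge> 0"
    and "loglik N xs p \<le> loglik N xs phat"
    and "i < N"
  shows "phat (xs i) > 0"
proof -
  have "loglik N xs p \<noteq> -\<infinity>"
    using assms(1,2) by (auto simp: loglik_eq_minf_iff)
  then have "loglik N xs phat \<noteq> -\<infinity>"
    using assms(4) by auto
  then show ?thesis
    using assms(1,3,5) by (force simp: loglik_eq_minf_iff)
qed

lemma mem_cls_self: "x \<in> cls F x"
  by (simp add: cls_def)

lemma eq_if_cls_eq:
  assumes "cls F x = cls F y" "f \<in> F"
  shows "f x = f y"
  using mem_cls_self[of x F] assms by (auto simp: cls_def)

theorem mainTheorem7: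
  fixes pstar :: "'a::countable \<Rightarrow> real"
    and F :: "('a \<Rightarrow> real) set"
    and N :: nat and xs :: "nat \<Rightarrow> 'a"
    and phat :: "'a \<Rightarrow> real"
  assumes "is_distr pstar"
    and "N \<ge> 1"
    and "\<forall>i<N. xs i \<in> valid_pts pstar"
    and "\<forall>f\<in>F. is_distr f"
    and "cls F ` (xs ` {..<N}) = cls F ` valid_pts pstar"
    and "pstar \<in> F"
    and "\<forall>x\<in>xs ` {..<N}. \<forall>x'\<in>xs ` {..<N}. x \<noteq> x' \<longrightarrow> cls F x \<noteq> cls F x'"
    and "phat \<in> F"
    and "\<forall>p\<in>F. loglik N xs p \<le> loglik N xs phat"
  shows "complete_distr pstar phat"
  unfolding complete_distr_def
proof
  fix x assume "x \<in> valid_pts pstar"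
  then have "cls F x \<in> cls F ` xs ` {..<N}"
    unfolding assms(5) by (rule imageI)
  then obtain i where i: "i < N" and cls_eq: "cls F x = cls F (xs i)"
    by blast
  have "phat x = phat (xs i)"
    using cls_eq assms(8) by (rule eq_if_cls_eq)
  moreover have "phat (xs i) > 0"
  proof -
    have "\<forall>i<N. pstar (xs i) > 0"
      using assms(3) by (simp add: valid_pts_def)
    moreover have "\<forall>i<N. phat (xs i) \<ge> 0"
      using assms(4,8) by (simp add: is_distr_def)
    moreover have "loglik N xs pstar \<le> loglik N xs phat"
      using assms(6,9) by blast
    ultimately show ?thesis
      using maximizer_pos_on_data assms(2) i by blast
  qed
  ultimately show "phat x > 0"
    by simp
qed

end
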